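(* Consider shadow estimation with uniform sampling from the local Clifford group $\mathrm{Cl}_1^{\times n}$ with noise channels $\Lambda(g_1,\dots,g_n)$ for each $(g_1,\dots,g_n)\in\mathrm{Cl}_1^{\times n}$. Then the noisy frame operator $\tilde S=\mathbb{E}_{g}[\omega(g)^\dagger M\omega(g)\Lambda(g)]$ ($g$ uniform) is $$\tilde S=\sum_{a\in\mathbb{F}_2^{2n}}\frac1{3^{|\mathrm{supp}(a)|}}|\hat\sigma_a)(\hat\sigma_a|\,\bar\Lambda_a,$$ where $\bar\Lambda_a=\mathbb{E}_{g_1\in G(a_1)}\cdots\mathbb{E}_{g_n\in G(a_n)}\Lambda(g_1,\dots,g_n)$. If the noise is local, i.e. $\Lambda(g_1,\dots,g_n)=\bigotimes_{i=1}^n\Lambda^{(i)}(g_i)$, then $\bar\Lambda_a=\bigotimes_{i=1}^n\mathbb{E}_{g_i\in G(a_i)}\Lambda^{(i)}(g_i)$.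
   Context: $d=2^n$; $(A|B)=\mathrm{Tr}(A^\dagger B)$; $|A)(B|$ is $C\mapsto(B|C)A$; $\omega(g)(A)=gAg^\dagger$, $\omega(g)^\dagger(A)=g^\dagger Ag$; for $g=g_1\otimes\cdots\otimes g_n$, $\omega(g)=\bigotimes_i\omega(g_i)$. $M=\sum_{x\in\mathbb{F}_2^n}|E_x)(E_x|$ with $E_x=|x\rangle\langle x|$. Single-qubit Paulis $\sigma_{00}=\mathbb 1,\sigma_{01}=X,\sigma_{11}=Y,\sigma_{10}=Z$; for $a=(a_1,\dots,a_n)$, $a_i\in\mathbb{F}_2^2$, $\sigma_a=\bigotimes_i\sigma_{a_i}$, $\hat\sigma_a=\sigma_a/\sqrt d$, $|\mathrm{supp}(a)|=|\{i:a_i\ne0\}|$. $\mathrm{Cl}_1$ is the single-qubit Clifford group, $\mathrm{St}(Z)=\{h\in\mathrm{Cl}_1:\omega(h)^\dagger|Z)(Z|\omega(h)=|Z)(Z|\}$, and for $a\in\mathbb{F}_2^2\setminus\{0\}$, $g_a\in\mathrm{Cl}_1$ is an element with $\omega(g_a)^\dagger|Z)(Z|\omega(g_a)=|\sigma_a)(\sigma_a|$. $G(a)=\mathrm{Cl}_1$ if $a=0$ and $G(a)=\mathrm{St}(Z)g_a=\{hg_a:h\in\mathrm{St}(Z)\}$ if $a\ne0$. Expectations over $G(a_i)$ are uniform averages. *)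

theory Defs
  imports Complex_Main
begin

text \<open>A single-qubit operator is a 2x2 complex matrix indexed by bool (False = |0>, True = |1>).
An n-qubit operator is a matrix indexed by bit strings (bool lists); only entries indexed by
lists of length n are meaningful (all sums range over such lists).\<close>

type_synonym op1 = "bool \<Rightarrow> bool \<Rightarrow> complex"
type_synonym sop1 = "op1 \<Rightarrow> op1"
type_synonym op = "bool list \<Rightarrow> bool list \<Rightarrow> complex"
type_synonym sop = "op \<Rightarrow> op"

definition basis :: "nat \<Rightarrow> bool list set" where
  "basis n = {x. length x = n}"

definition munit1 :: "bool \<Rightarrow> bool \<Rightarrow> op1" where
  "munit1 x y = (\<lambda>u v. if u = x \<and> v = y then 1 else 0)"

definition munit :: "bool list \<Rightarrow> bool list \<Rightarrow> op" where
  "munit x y = (\<lambda>u v. if u = x \<and> v = y then 1 else 0)"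

definition hs1 :: "op1 \<Rightarrow> op1 \<Rightarrow> complex" where
  "hs1 A B = (\<Sum>x\<in>UNIV. \<Sum>y\<in>UNIV. cnj (A x y) * B x y)"

definition hs :: "nat \<Rightarrow> op \<Rightarrow> op \<Rightarrow> complex" where
  "hs n A B = (\<Sum>x\<in>basis n. \<Sum>y\<in>basis n. cnj (A x y) * B x y)"

definition ketbra1 :: "op1 \<Rightarrow> op1 \<Rightarrow> sop1" where
  "ketbra1 A B = (\<lambda>C u v. hs1 B C * A u v)"

definition ketbra :: "nat \<Rightarrow> op \<Rightarrow> op \<Rightarrow> sop" where
  "ketbra n A B = (\<lambda>C u v. hs n B C * A u v)"

definition sadj1 :: "sop1 \<Rightarrow> sop1" where
  "sadj1 \<Phi> = (\<lambda>B u v. \<Sum>x\<in>UNIV. \<Sum>y\<in>UNIV. hs1 (\<Phi> (munit1 x y)) B * munit1 x y u v)"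

definition sadj :: "nat \<Rightarrow> sop \<Rightarrow> sop" where
  "sadj n \<Phi> = (\<lambda>B u v. \<Sum>x\<in>basis n. \<Sum>y\<in>basis n. hs n (\<Phi> (munit x y)) B * munit x y u v)"

definition mmul1 :: "op1 \<Rightarrow> op1 \<Rightarrow> op1" where
  "mmul1 A B = (\<lambda>x y. \<Sum>z\<in>UNIV. A x z * B z y)"

definition dagger1 :: "op1 \<Rightarrow> op1" where
  "dagger1 U = (\<lambda>x y. cnj (U y x))"

definition id1 :: op1 where
  "id1 = (\<lambda>x y. if x = y then 1 else 0)"

definition unitary1 :: "op1 \<Rightarrow> bool" where
  "unitary1 U \<longleftrightarrow> mmul1 U (dagger1 U) = id1 \<and> mmul1 (dagger1 U) U = id1"

definition omega1 :: "op1 \<Rightarrow> sop1" where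
  "omega1 U = (\<lambda>A. mmul1 (mmul1 U A) (dagger1 U))"

text \<open>sigma_00 = 1, sigma_01 = X, sigma_11 = Y, sigma_10 = Z; an element of F_2^2 is a pair of bools.\<close>
definition pauli1 :: "bool \<times> bool \<Rightarrow> op1" where
  "pauli1 a = (case a of
      (False, False) \<Rightarrow> id1
    | (False, True) \<Rightarrow> (\<lambda>x y. if x \<noteq> y then 1 else 0)
    | (True, True) \<Rightarrow> (\<lambda>x y. if \<not> x \<and> y then - \<i> else if x \<and> \<not> y then \<i> else 0)
    | (True, False) \<Rightarrow> (\<lambda>x y. if x = y then (if x then -1 else 1) else 0))"

abbreviation pauliZ :: op1 where "pauliZ \<equiv> pauli1 (True, False)"

definition clifford_unitary1 :: "op1 \<Rightarrow> bool" where
  "clifford_unitary1 U \<longleftrightarrow> unitary1 U \<and>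
     (\<forall>a. \<exists>b c. omega1 U (pauli1 a) = (\<lambda>x y. c * pauli1 b x y))"

text \<open>The single-qubit Clifford group Cl_1, taken modulo global phases: an element g is
identified with its adjoint action omega(g). Hence Cl1 is a finite set of superoperators,
and omega(g) = g for g in Cl1.\<close>
definition Cl1 :: "sop1 set" where
  "Cl1 = omega1 ` {U. clifford_unitary1 U}"

definition StZ :: "sop1 set" where
  "StZ = {h \<in> Cl1. sadj1 h \<circ> ketbra1 pauliZ pauliZ \<circ> h = ketbra1 pauliZ pauliZ}"

text \<open>G(a) = Cl_1 if a = 0, and St(Z) g_a otherwise (product hg corresponds to
omega(h) o omega(g)).\<close>
definition Gset :: "(bool \<times> bool \<Rightarrow> sop1) \<Rightarrow> bool \<times> bool \<Rightarrow> sop1 set" where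
  "Gset ga a = (if a = (False, False) then Cl1 else (\<lambda>h. h \<circ> ga a) ` StZ)"

definition ktensor :: "op1 list \<Rightarrow> op" where
  "ktensor ms = (\<lambda>x y. \<Prod>i<length ms. (ms ! i) (x ! i) (y ! i))"

definition stensor :: "sop1 list \<Rightarrow> sop" where
  "stensor \<Phi>s = (\<lambda>A u v. \<Sum>x\<in>basis (length \<Phi>s). \<Sum>y\<in>basis (length \<Phi>s).
      A x y * ktensor (map (\<lambda>i. (\<Phi>s ! i) (munit1 (x ! i) (y ! i))) [0..<length \<Phi>s]) u v)"

definition pauli :: "(bool \<times> bool) list \<Rightarrow> op" where
  "pauli a = ktensor (map pauli1 a)"

definition npauli :: "(bool \<times> bool) list \<Rightarrow> op" where
  "npauli a = (\<lambda>x y. pauli a x y / complex_of_real (sqrt (2 ^ length a)))"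

definition supp_size :: "(bool \<times> bool) list \<Rightarrow> nat" where
  "supp_size a = length (filter (\<lambda>ai. ai \<noteq> (False, False)) a)"

definition pauli_labels :: "nat \<Rightarrow> (bool \<times> bool) list set" where
  "pauli_labels n = {a. length a = n}"

definition Mmeas :: "nat \<Rightarrow> sop" where
  "Mmeas n = (\<lambda>A u v. \<Sum>x\<in>basis n. ketbra n (munit x x) (munit x x) A u v)"

definition ClN :: "nat \<Rightarrow> sop1 list set" where
  "ClN n = {gs. length gs = n \<and> set gs \<subseteq> Cl1}"

definition savg :: "'g set \<Rightarrow> ('g \<Rightarrow> ('a \<Rightarrow> 'b \<Rightarrow> 'c \<Rightarrow> complex)) \<Rightarrow> 'a \<Rightarrow> 'b \<Rightarrow> 'c \<Rightarrow> complex" where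
  "savg S F = (\<lambda>A u v. (\<Sum>g\<in>S. F g A u v) / of_nat (card S))"

definition noisy_frame :: "nat \<Rightarrow> (sop1 list \<Rightarrow> sop) \<Rightarrow> sop" where
  "noisy_frame n \<Lambda> = savg (ClN n)
     (\<lambda>gs. sadj n (stensor gs) \<circ> Mmeas n \<circ> stensor gs \<circ> \<Lambda> gs)"

text \<open>bar Lambda_a = E_{g1 in G(a1)} ... E_{gn in G(an)} Lambda(g1,...,gn)
(iterated uniform averages = uniform average over the product set).\<close>
definition Gprod :: "(bool \<times> bool \<Rightarrow> sop1) \<Rightarrow> (bool \<times> bool) list \<Rightarrow> sop1 list set" where
  "Gprod ga a = {gs. length gs = length a \<and> (\<forall>i<length a. gs ! i \<in> Gset ga (a ! i))}"

definition Lambda_bar :: "(bool \<times> bool \<Rightarrow> sop1) \<Rightarrow> (sop1 list \<Rightarrow> sop) \<Rightarrow> (bool \<times> bool) list \<Rightarrow> sop" where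
  "Lambda_bar ga \<Lambda> a = savg (Gprod ga a) \<Lambda>"

definition trace_n :: "nat \<Rightarrow> op \<Rightarrow> complex" where
  "trace_n n A = (\<Sum>x\<in>basis n. A x x)"

definition quantum_channel :: "nat \<Rightarrow> sop \<Rightarrow> bool" where
  "quantum_channel n \<Phi> \<longleftrightarrow>
     \<comment> \<open>only depends on the meaningful entries\<close>
     (\<forall>A B. (\<forall>x\<in>basis n. \<forall>y\<in>basis n. A x y = B x y) \<longrightarrow>
        (\<forall>u\<in>basis n. \<forall>v\<in>basis n. \<Phi> A u v = \<Phi> B u v)) \<and>
     \<comment> \<open>linear\<close>
     (\<forall>A B c. \<forall>u\<in>basis n. \<forall>v\<in>basis n.
        \<Phi> (\<lambda>x y. A x y + c * B x y) u v = \<Phi> A u v + c * \<Phi> B u v) \<and>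
     \<comment> \<open>trace preserving\<close>
     (\<forall>A. trace_n n (\<Phi> A) = trace_n n A) \<and>
     \<comment> \<open>completely positive: the Choi matrix is positive semidefinite\<close>
     (\<forall>w :: bool list \<Rightarrow> bool list \<Rightarrow> complex.
        let q = (\<Sum>x\<in>basis n. \<Sum>u\<in>basis n. \<Sum>y\<in>basis n. \<Sum>v\<in>basis n.
                   cnj (w x u) * \<Phi> (munit x y) u v * w y v)
        in Im q = 0 \<and> Re q \<ge> 0)"

end

(*
  On one qubit M = (|1)(1| + |Z)(Z|)/2, so for a Clifford g the operator
  omega(g)^dagger M omega(g) equals (|1)(1| + |sigma_b)(sigma_b|)/2, where sigma_b is (up to sign)
  the Pauli omega(g)^dagger(Z).  Its label b = Zlabel g is nonzero, and the cosets St(Z) g_b are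
  exactly the fibres of Zlabel.  Tensoring over the qubits, omega(g)^dagger M omega(g) is the sum of
  |hat sigma_a)(hat sigma_a| over the labels a with a_i in {0, Zlabel g_i} for all i, i.e. over
  the a with g in G(a).  Averaging over g and exchanging the two sums puts the factor
  |G(a)| / |Cl_1|^n = 3^(-|supp a|) in front of the average of Lambda over G(a).  For local noise
  that average over the product set G(a_1) x ... x G(a_n) factorises over the qubits.
*)

theory Submission
  imports Defs "HOL-Library.FuncSet"
begin

section \<open>Lists with prescribed entries\<close>

definition nth_lists :: "nat \<Rightarrow> (nat \<Rightarrow> 'a set) \<Rightarrow> 'a list set" where
  "nth_lists n S = {xs. length xs = n \<and> (\<forall>i<n. xs ! i \<in> S i)}"

lemma bij_betw_PiE_nth_lists: "bij_betw (\<lambda>h. map h [0..<n]) (PiE {..<n} S) (nth_lists n S)"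
  by (rule bij_betw_byWitness[where f' = "\<lambda>xs. restrict (nth xs) {..<n}"])
     (auto simp: nth_lists_def PiE_def extensional_def fun_eq_iff intro: nth_equalityI)

lemma finite_nth_lists:
  assumes "\<And>i. i < n \<Longrightarrow> finite (S i)"
  shows "finite (nth_lists n S)"
proof -
  have "finite (PiE {..<n} S)"
    using assms by (intro finite_PiE) auto
  then show ?thesis
    using bij_betw_finite[OF bij_betw_PiE_nth_lists] by blast
qed

lemma card_nth_lists: "card (nth_lists n S) = (\<Prod>i<n. card (S i))"
  using bij_betw_same_card[OF bij_betw_PiE_nth_lists[of n S]] by (simp add: card_PiE)

lemma sum_prod_nth_lists:
  fixes f :: "nat \<Rightarrow> 'a \<Rightarrow> 'b::comm_semiring_1"
  assumes "\<And>i. i < n \<Longrightarrow> finite (S i)"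
  shows "(\<Sum>xs\<in>nth_lists n S. \<Prod>i<n. f i (xs ! i)) = (\<Prod>i<n. \<Sum>x\<in>S i. f i x)"
proof -
  have "(\<Prod>i<n. \<Sum>x\<in>S i. f i x) = (\<Sum>h\<in>PiE {..<n} S. \<Prod>i<n. f i (h i))"
    using assms by (intro prod_sum_PiE) auto
  also have "\<dots> = (\<Sum>h\<in>PiE {..<n} S. \<Prod>i<n. f i (map h [0..<n] ! i))"
    by (intro sum.cong prod.cong) auto
  also have "\<dots> = (\<Sum>xs\<in>nth_lists n S. \<Prod>i<n. f i (xs ! i))"
    by (rule sum.reindex_bij_betw[OF bij_betw_PiE_nth_lists])
  finally show ?thesis ..
qed

section \<open>Single-qubit matrices and Paulis\<close>

lemma sum_UNIV_bool: "(\<Sum>x\<in>UNIV. f x) = f False + f True"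
  by (simp add: UNIV_bool)

lemma sum_UNIV_pauli_label:
  "(\<Sum>a\<in>UNIV. f a) = f (False, False) + f (False, True) + f (True, False) + f (True, True)"
proof -
  have UNIV_eq: "(UNIV :: (bool \<times> bool) set) = {(False, False), (False, True), (True, False), (True, True)}"
    by (auto simp: UNIV_bool)
  show ?thesis
    by (subst UNIV_eq) (simp add: add.assoc)
qed

lemmas mat1_defs = mmul1_def dagger1_def id1_def omega1_def sum_UNIV_bool

lemma mmul1_assoc: "mmul1 (mmul1 A B) C = mmul1 A (mmul1 B C)"
  by (simp add: fun_eq_iff mat1_defs algebra_simps)

lemma dagger1_mmul1: "dagger1 (mmul1 A B) = mmul1 (dagger1 B) (dagger1 A)"
  by (simp add: fun_eq_iff mat1_defs algebra_simps)

lemma dagger1_dagger1 [simp]: "dagger1 (dagger1 A) = A"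
  by (simp add: dagger1_def)

lemma dagger1_id1 [simp]: "dagger1 id1 = id1"
  by (simp add: fun_eq_iff mat1_defs)

lemma mmul1_id1 [simp]: "mmul1 id1 A = A" "mmul1 A id1 = A"
  by (simp_all add: fun_eq_iff mat1_defs)

lemma omega1_omega1: "omega1 U (omega1 V A) = omega1 (mmul1 U V) A"
  by (simp add: omega1_def dagger1_mmul1 mmul1_assoc)

lemma omega1_comp: "omega1 U \<circ> omega1 V = omega1 (mmul1 U V)"
  by (simp add: fun_eq_iff omega1_omega1)

lemma omega1_dagger1_cancel:
  assumes "unitary1 U"
  shows "omega1 (dagger1 U) (omega1 U A) = A" "omega1 U (omega1 (dagger1 U) A) = A"
  using assms by (simp_all add: omega1_omega1 unitary1_def, simp_all add: omega1_def mmul1_assoc)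

lemma unitary1_dagger1: "unitary1 U \<Longrightarrow> unitary1 (dagger1 U)"
  by (simp add: unitary1_def)

lemma unitary1_mmul1: "unitary1 U \<Longrightarrow> unitary1 V \<Longrightarrow> unitary1 (mmul1 U V)"
  unfolding unitary1_def dagger1_mmul1 by (metis mmul1_assoc mmul1_id1)

lemma omega1_scale: "omega1 U (\<lambda>x y. c * A x y) = (\<lambda>x y. c * omega1 U A x y)"
  by (simp add: fun_eq_iff mat1_defs algebra_simps)

lemma omega1_id1: "unitary1 U \<Longrightarrow> omega1 U id1 = id1"
  by (simp add: omega1_def unitary1_def)

lemma omega1_mmul1: "unitary1 U \<Longrightarrow> mmul1 (omega1 U A) (omega1 U B) = omega1 U (mmul1 A B)"
  unfolding omega1_def unitary1_def by (metis mmul1_assoc mmul1_id1)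

lemma sadj1_omega1: "sadj1 (omega1 U) = omega1 (dagger1 U)"
  by (auto simp: fun_eq_iff mat1_defs sadj1_def hs1_def munit1_def algebra_simps)

lemma hs1_omega1: "hs1 A (omega1 U C) = hs1 (omega1 (dagger1 U) A) C"
  by (simp add: hs1_def mat1_defs algebra_simps)

lemma hs1_scale: "hs1 A (\<lambda>x y. c * B x y) = c * hs1 A B"
  by (simp add: hs1_def sum_UNIV_bool algebra_simps)

lemma pauli1_squared: "mmul1 (pauli1 a) (pauli1 a) = id1"
  by (cases a) (auto simp: fun_eq_iff mat1_defs pauli1_def split: bool.splits)

lemma hs1_pauli1: "hs1 (pauli1 a) (pauli1 b) = (if a = b then 2 else 0)"
  by (cases a; cases b) (auto simp: hs1_def sum_UNIV_bool pauli1_def id1_def split: bool.splits)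

lemma pauli1_nonzero: "pauli1 a \<noteq> (\<lambda>x y. 0)"
  using hs1_pauli1[of a a] by (auto simp: hs1_def)

lemma pauli1_expansion: "A = (\<lambda>x y. \<Sum>a\<in>UNIV. (hs1 (pauli1 a) A / 2) * pauli1 a x y)"
  by (auto simp: fun_eq_iff sum_UNIV_pauli_label sum_UNIV_bool hs1_def pauli1_def id1_def field_simps)

lemma omega1_sum: "omega1 U (\<lambda>x y. \<Sum>a\<in>S. F a x y) = (\<lambda>x y. \<Sum>a\<in>S. omega1 U (F a) x y)"
  by (simp add: fun_eq_iff mat1_defs sum_distrib_left sum_distrib_right sum.distrib distrib_left
      distrib_right)

lemma omega1_eqI_pauli1:
  assumes "\<And>a. omega1 U (pauli1 a) = omega1 V (pauli1 a)"
  shows "omega1 U = omega1 V"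
proof
  fix A
  show "omega1 U A = omega1 V A"
    by (subst (1 2) pauli1_expansion[of A]) (simp only: omega1_sum omega1_scale assms)
qed

section \<open>The single-qubit Clifford group\<close>

lemma clifford_unitary1_pauli1:
  assumes "clifford_unitary1 U"
  obtains b s where "s = 1 \<or> s = -1" "omega1 U (pauli1 a) = (\<lambda>x y. s * pauli1 b x y)"
proof -
  obtain b s where bs: "omega1 U (pauli1 a) = (\<lambda>x y. s * pauli1 b x y)"
    using assms unfolding clifford_unitary1_def by metis
  have "unitary1 U"
    using assms by (simp add: clifford_unitary1_def)
  then have "mmul1 (omega1 U (pauli1 a)) (omega1 U (pauli1 a)) = id1"
    by (simp add: omega1_mmul1 pauli1_squared omega1_id1)
  then have "(\<lambda>x y. (s * s) * mmul1 (pauli1 b) (pauli1 b) x y) = id1"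
    unfolding bs by (simp add: mmul1_def sum_distrib_left mult_ac)
  then have "s * s * id1 True True = id1 True True"
    by (metis pauli1_squared)
  then have "s\<^sup>2 = 1"
    by (simp add: id1_def power2_eq_square)
  then show thesis
    using that bs by (simp add: power2_eq_1_iff)
qed

lemma clifford_unitary1_mmul1:
  assumes "clifford_unitary1 U" "clifford_unitary1 V"
  shows "clifford_unitary1 (mmul1 U V)"
proof -
  have "\<exists>b c. omega1 (mmul1 U V) (pauli1 a) = (\<lambda>x y. c * pauli1 b x y)" for a
  proof -
    obtain b c where 1: "omega1 V (pauli1 a) = (\<lambda>x y. c * pauli1 b x y)"
      using assms(2) unfolding clifford_unitary1_def by metis
    obtain b' c' where 2: "omega1 U (pauli1 b) = (\<lambda>x y. c' * pauli1 b' x y)"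
      using assms(1) unfolding clifford_unitary1_def by metis
    have "omega1 (mmul1 U V) (pauli1 a) = (\<lambda>x y. (c * c') * pauli1 b' x y)"
      by (simp add: omega1_omega1[symmetric] 1 omega1_scale 2 mult_ac)
    then show ?thesis
      by metis
  qed
  then show ?thesis
    using assms by (simp add: clifford_unitary1_def unitary1_mmul1)
qed

(* The label map a \<mapsto> b with omega1 U (pauli1 a) = +-pauli1 b is injective, hence onto. *)
lemma clifford_unitary1_pauli1_surj:
  assumes "clifford_unitary1 U"
  obtains a s where "s = 1 \<or> s = -1" "omega1 U (pauli1 a) = (\<lambda>x y. s * pauli1 b x y)"
proof -
  have "\<exists>b s. (s = 1 \<or> s = -1) \<and> omega1 U (pauli1 a) = (\<lambda>x y. s * pauli1 b x y)" for a
    by (rule clifford_unitary1_pauli1[OF assms, of a]) blast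
  then obtain lbl sgn where lbl: "\<And>a. (sgn a = 1 \<or> sgn a = -1) \<and>
      omega1 U (pauli1 a) = (\<lambda>x y. sgn a * pauli1 (lbl a) x y)"
    by metis
  have U: "unitary1 U"
    using assms by (simp add: clifford_unitary1_def)
  have "inj lbl"
  proof (rule injI)
    fix a a'
    assume "lbl a = lbl a'"
    then have "omega1 U (\<lambda>x y. sgn a' * pauli1 a x y) = omega1 U (\<lambda>x y. sgn a * pauli1 a' x y)"
      by (simp add: omega1_scale lbl mult_ac)
    then have "(\<lambda>x y. sgn a' * pauli1 a x y) = (\<lambda>x y. sgn a * pauli1 a' x y)"
      by (metis omega1_dagger1_cancel(1)[OF U])
    then have "sgn a' * hs1 (pauli1 a) (pauli1 a) = sgn a * hs1 (pauli1 a) (pauli1 a')"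
      by (metis hs1_scale)
    then show "a = a'"
      using lbl[of a] lbl[of a'] by (auto simp: hs1_pauli1 split: if_splits)
  qed
  then have "surj lbl"
    by (simp add: finite_UNIV_inj_surj)
  then obtain a where "lbl a = b"
    by (metis surjD)
  then show thesis
    using that lbl[of a] by blast
qed

lemma clifford_unitary1_dagger1:
  assumes "clifford_unitary1 U"
  shows "clifford_unitary1 (dagger1 U)"
proof -
  have U: "unitary1 U"
    using assms by (simp add: clifford_unitary1_def)
  have "\<exists>a s. omega1 (dagger1 U) (pauli1 b) = (\<lambda>x y. s * pauli1 a x y)" for b
  proof -
    obtain a s where s: "s = 1 \<or> s = -1" and a: "omega1 U (pauli1 a) = (\<lambda>x y. s * pauli1 b x y)"
      using assms by (rule clifford_unitary1_pauli1_surj)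
    have "pauli1 a = (\<lambda>x y. s * omega1 (dagger1 U) (pauli1 b) x y)"
      using omega1_dagger1_cancel(1)[OF U, of "pauli1 a"] by (simp add: a omega1_scale)
    then have "omega1 (dagger1 U) (pauli1 b) = (\<lambda>x y. s * pauli1 a x y)"
      using s by (auto simp: fun_eq_iff)
    then show ?thesis
      by blast
  qed
  then show ?thesis
    using U by (simp add: clifford_unitary1_def unitary1_dagger1)
qed

lemma Cl1_cases:
  assumes "g \<in> Cl1"
  obtains U where "clifford_unitary1 U" "g = omega1 U"
  using assms by (auto simp: Cl1_def)

lemma omega1_in_Cl1: "clifford_unitary1 U \<Longrightarrow> omega1 U \<in> Cl1"
  by (simp add: Cl1_def)

lemma comp_in_Cl1:
  assumes "g \<in> Cl1" "h \<in> Cl1"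
  shows "g \<circ> h \<in> Cl1"
proof -
  obtain U V where "clifford_unitary1 U" "g = omega1 U" "clifford_unitary1 V" "h = omega1 V"
    using assms by (metis Cl1_cases)
  then show ?thesis
    by (simp add: omega1_comp omega1_in_Cl1 clifford_unitary1_mmul1)
qed

lemma sadj1_in_Cl1: "g \<in> Cl1 \<Longrightarrow> sadj1 g \<in> Cl1"
  by (auto elim!: Cl1_cases simp: sadj1_omega1 omega1_in_Cl1 clifford_unitary1_dagger1)

lemma sadj1_sadj1_Cl1: "g \<in> Cl1 \<Longrightarrow> sadj1 (sadj1 g) = g"
  by (auto elim!: Cl1_cases simp: sadj1_omega1)

lemma Cl1_sadj1_inverse:
  assumes "g \<in> Cl1"
  shows "sadj1 g \<circ> g = id" "g \<circ> sadj1 g = id"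
  using assms by (auto elim!: Cl1_cases simp: fun_eq_iff sadj1_omega1 omega1_dagger1_cancel
      clifford_unitary1_def)

lemma sadj1_comp_Cl1: "g \<in> Cl1 \<Longrightarrow> h \<in> Cl1 \<Longrightarrow> sadj1 (g \<circ> h) = sadj1 h \<circ> sadj1 g"
  by (auto elim!: Cl1_cases simp: omega1_comp sadj1_omega1 dagger1_mmul1)

(* An element of Cl1 is determined by its values on the four Paulis, and each value is a
   Pauli up to a sign. *)
lemma finite_Cl1: "finite Cl1"
proof -
  define T where "T = (\<lambda>(s, b). (\<lambda>x y. s * pauli1 b x y)) ` ({1, -1 :: complex} \<times> UNIV)"
  define on_paulis where "on_paulis = (\<lambda>\<Phi> :: sop1. \<lambda>a. \<Phi> (pauli1 a))"
  have "inj_on on_paulis Cl1"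
    by (rule inj_onI) (metis Cl1_cases omega1_eqI_pauli1 on_paulis_def)
  moreover have "on_paulis ` Cl1 \<subseteq> Pi\<^sub>E UNIV (\<lambda>_. T)"
  proof (clarsimp simp: PiE_UNIV_domain)
    fix g a
    assume "g \<in> Cl1"
    then obtain U where U: "clifford_unitary1 U" "g = omega1 U"
      by (rule Cl1_cases)
    obtain b s where "s = 1 \<or> s = -1" "omega1 U (pauli1 a) = (\<lambda>x y. s * pauli1 b x y)"
      by (rule clifford_unitary1_pauli1[OF U(1)])
    then show "on_paulis g a \<in> T"
      using U(2) unfolding on_paulis_def T_def by (auto intro!: image_eqI[where x = "(s, b)"])
  qed
  moreover have "finite (Pi\<^sub>E UNIV (\<lambda>_ :: bool \<times> bool. T))"
    unfolding T_def by (intro finite_PiE) auto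
  ultimately show ?thesis
    by (metis finite_imageD finite_subset)
qed

lemma sadj1_comp_ketbra1_comp:
  assumes "g \<in> Cl1"
  shows "sadj1 g \<circ> ketbra1 A A \<circ> g = ketbra1 (sadj1 g A) (sadj1 g A)"
proof -
  obtain U where U: "clifford_unitary1 U" "g = omega1 U"
    using assms by (rule Cl1_cases)
  show ?thesis
    unfolding U(2) by (simp add: fun_eq_iff sadj1_omega1 ketbra1_def omega1_scale hs1_omega1)
qed

lemma ketbra1_sign: "s = 1 \<or> s = -1 \<Longrightarrow> ketbra1 (\<lambda>x y. s * A x y) (\<lambda>x y. s * A x y) = ketbra1 A A"
  by (auto simp: fun_eq_iff ketbra1_def hs1_def sum_negf)

lemma ketbra1_pauli1_inj:
  assumes "ketbra1 (pauli1 b) (pauli1 b) = ketbra1 (pauli1 b') (pauli1 b')"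
  shows "b = b'"
proof (rule ccontr)
  assume "b \<noteq> b'"
  have "ketbra1 (pauli1 b) (pauli1 b) (pauli1 b) = ketbra1 (pauli1 b') (pauli1 b') (pauli1 b)"
    using assms by simp
  with \<open>b \<noteq> b'\<close> have "pauli1 b = (\<lambda>u v. 0)"
    by (simp add: fun_eq_iff ketbra1_def hs1_pauli1)
  then show False
    using pauli1_nonzero by blast
qed

lemma Cl1_sadj1_pauliZ:
  assumes "g \<in> Cl1"
  obtains s b where "b \<noteq> (False, False)" "s = 1 \<or> s = -1"
    "sadj1 g pauliZ = (\<lambda>x y. s * pauli1 b x y)"
proof -
  obtain U where U: "clifford_unitary1 U" "g = omega1 U"
    using assms by (rule Cl1_cases)
  then have "unitary1 U"
    by (simp add: clifford_unitary1_def)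
  obtain b s where s: "s = 1 \<or> s = -1" and b: "omega1 (dagger1 U) pauliZ = (\<lambda>x y. s * pauli1 b x y)"
    using clifford_unitary1_pauli1[OF clifford_unitary1_dagger1[OF U(1)]] by metis
  have "b \<noteq> (False, False)"
  proof
    assume "b = (False, False)"
    then have "pauliZ = omega1 U (\<lambda>x y. s * id1 x y)"
      using b omega1_dagger1_cancel(2)[OF \<open>unitary1 U\<close>, of pauliZ] by (simp add: pauli1_def)
    then have "pauliZ = (\<lambda>x y. s * id1 x y)"
      by (simp add: omega1_scale omega1_id1[OF \<open>unitary1 U\<close>])
    then have "pauliZ False False = s * id1 False False" "pauliZ True True = s * id1 True True"
      by simp_all
    then show False
      by (simp add: pauli1_def id1_def)
  qed
  then show thesis
    using that s b U(2) by (simp add: sadj1_omega1)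
qed

definition Zlabel :: "sop1 \<Rightarrow> bool \<times> bool" where
  "Zlabel g = (THE b. sadj1 g \<circ> ketbra1 pauliZ pauliZ \<circ> g = ketbra1 (pauli1 b) (pauli1 b))"

lemma conj_pauliZ_eq_iff:
  assumes "g \<in> Cl1" "s = 1 \<or> s = -1" "sadj1 g pauliZ = (\<lambda>x y. s * pauli1 b x y)"
  shows "sadj1 g \<circ> ketbra1 pauliZ pauliZ \<circ> g = ketbra1 (pauli1 b') (pauli1 b') \<longleftrightarrow> b' = b"
proof -
  have "sadj1 g \<circ> ketbra1 pauliZ pauliZ \<circ> g = ketbra1 (pauli1 b) (pauli1 b)"
    by (simp add: sadj1_comp_ketbra1_comp assms ketbra1_sign)
  then show ?thesis
    using ketbra1_pauli1_inj by metis
qed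

lemma Zlabel_eqI:
  assumes "g \<in> Cl1" "s = 1 \<or> s = -1" "sadj1 g pauliZ = (\<lambda>x y. s * pauli1 b x y)"
  shows "Zlabel g = b"
  unfolding Zlabel_def conj_pauliZ_eq_iff[OF assms] by simp

lemma Zlabel_nonzero:
  assumes "g \<in> Cl1"
  shows "Zlabel g \<noteq> (False, False)"
proof -
  obtain s b where "b \<noteq> (False, False)" "s = 1 \<or> s = -1" "sadj1 g pauliZ = (\<lambda>x y. s * pauli1 b x y)"
    using assms by (rule Cl1_sadj1_pauliZ)
  then show ?thesis
    using Zlabel_eqI[OF assms] by simp
qed

lemma sadj1_pauliZ_Zlabel:
  assumes "g \<in> Cl1"
  obtains s where "s = 1 \<or> s = -1" "sadj1 g pauliZ = (\<lambda>x y. s * pauli1 (Zlabel g) x y)"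
proof -
  obtain s b where "s = 1 \<or> s = -1" "sadj1 g pauliZ = (\<lambda>x y. s * pauli1 b x y)"
    using assms by (rule Cl1_sadj1_pauliZ)
  then show thesis
    using that Zlabel_eqI[OF assms] by simp
qed

lemma conj_pauliZ_eq_iff_Zlabel:
  assumes "g \<in> Cl1"
  shows "sadj1 g \<circ> ketbra1 pauliZ pauliZ \<circ> g = ketbra1 (pauli1 b) (pauli1 b) \<longleftrightarrow> b = Zlabel g"
proof -
  obtain s where "s = 1 \<or> s = -1" "sadj1 g pauliZ = (\<lambda>x y. s * pauli1 (Zlabel g) x y)"
    using assms by (rule sadj1_pauliZ_Zlabel)
  then show ?thesis
    by (rule conj_pauliZ_eq_iff[OF assms])
qed

lemma mem_StZ_coset_iff:
  assumes k: "k \<in> Cl1"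
  shows "g \<in> (\<lambda>h. h \<circ> k) ` StZ \<longleftrightarrow>
    g \<in> Cl1 \<and> sadj1 g \<circ> ketbra1 pauliZ pauliZ \<circ> g = sadj1 k \<circ> ketbra1 pauliZ pauliZ \<circ> k"
    (is "_ \<longleftrightarrow> _ \<and> ?conj g = ?conj k")
proof
  assume "g \<in> (\<lambda>h. h \<circ> k) ` StZ"
  then obtain h where "h \<in> StZ" and g: "g = h \<circ> k"
    by blast
  then have h: "h \<in> Cl1" "?conj h = ketbra1 pauliZ pauliZ"
    unfolding StZ_def by blast+
  have "?conj g = sadj1 k \<circ> ?conj h \<circ> k"
    by (simp only: g sadj1_comp_Cl1[OF h(1) k] comp_assoc)
  also have "\<dots> = ?conj k"
    by (simp only: h(2))
  finally show "g \<in> Cl1 \<and> ?conj g = ?conj k"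
    using g comp_in_Cl1[OF h(1) k] by blast
next
  assume "g \<in> Cl1 \<and> ?conj g = ?conj k"
  then have g: "g \<in> Cl1" and g_conj: "?conj g = ?conj k"
    by blast+
  define h where "h = g \<circ> sadj1 k"
  have h: "h \<in> Cl1"
    unfolding h_def using g comp_in_Cl1 sadj1_in_Cl1 k by blast
  have "h \<circ> k = g"
    by (simp only: h_def comp_assoc Cl1_sadj1_inverse(1)[OF k] comp_id)
  have "?conj h = k \<circ> ?conj g \<circ> sadj1 k"
    by (simp only: h_def sadj1_comp_Cl1[OF g sadj1_in_Cl1[OF k]] sadj1_sadj1_Cl1[OF k] comp_assoc)
  also have "\<dots> = (k \<circ> sadj1 k) \<circ> ketbra1 pauliZ pauliZ \<circ> (k \<circ> sadj1 k)"
    unfolding g_conj by (simp only: comp_assoc)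
  also have "\<dots> = ketbra1 pauliZ pauliZ"
    by (simp only: Cl1_sadj1_inverse(2)[OF k] id_comp comp_id)
  finally have "h \<in> StZ"
    using h by (simp only: StZ_def mem_Collect_eq)
  then show "g \<in> (\<lambda>h. h \<circ> k) ` StZ"
    using \<open>h \<circ> k = g\<close> by blast
qed

section \<open>Coordinates of n-qubit operators\<close>

lemma basis_eq_nth_lists: "basis n = nth_lists n (\<lambda>_. UNIV)"
  by (simp add: basis_def nth_lists_def)

lemma finite_basis [simp]: "finite (basis n)"
  unfolding basis_eq_nth_lists by (rule finite_nth_lists) simp

lemma munit_swap: "munit x y u v = munit u v x y"
  by (auto simp: munit_def)

lemma sum_basis_munit:
  assumes "u \<in> basis n" "v \<in> basis n"
  shows "(\<Sum>x\<in>basis n. \<Sum>y\<in>basis n. munit u v x y * T x y) = T u v"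
  using assms finite_basis[of n]
  by (simp add: munit_def of_bool_def[symmetric] of_bool_conj mult.assoc sum_distrib_left[symmetric])

lemma hs_munit: "u \<in> basis n \<Longrightarrow> v \<in> basis n \<Longrightarrow> hs n (munit u v) D = D u v"
  unfolding hs_def using sum_basis_munit[of u n v D]
  by (simp add: munit_def if_distrib[of cnj] cong: if_cong)

lemma sadj_apply: "u \<in> basis n \<Longrightarrow> v \<in> basis n \<Longrightarrow> sadj n \<Phi> B u v = hs n (\<Phi> (munit u v)) B"
  unfolding sadj_def munit_swap[of _ _ u v]
  by (subst sum_basis_munit[symmetric, of u n v]) (simp_all add: mult.commute)

lemma stensor_apply:
  "length gs = n \<Longrightarrow> stensor gs D p q =
     (\<Sum>x\<in>basis n. \<Sum>y\<in>basis n. D x y * (\<Prod>i<n. (gs ! i) (munit1 (x ! i) (y ! i)) (p ! i) (q ! i)))"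
  by (simp add: stensor_def ktensor_def)

lemma stensor_munit:
  assumes "length gs = n" "u \<in> basis n" "v \<in> basis n"
  shows "stensor gs (munit u v) p q = (\<Prod>i<n. (gs ! i) (munit1 (u ! i) (v ! i)) (p ! i) (q ! i))"
  unfolding stensor_apply[OF assms(1)] by (rule sum_basis_munit[OF assms(2,3)])

lemma Mmeas_apply:
  assumes "u \<in> basis n" "v \<in> basis n"
  shows "Mmeas n D u v = of_bool (u = v) * D u u"
proof -
  have "Mmeas n D u v = (\<Sum>x\<in>basis n. of_bool (x = u) * (of_bool (x = v) * D x x))"
    unfolding Mmeas_def ketbra_def
    by (intro sum.cong refl) (simp add: hs_munit, simp add: munit_def of_bool_def[symmetric])
  then show ?thesis
    using assms by (simp add: sum_distrib_left[symmetric])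
qed

lemma hs_Mmeas: "hs n B (Mmeas n D) = (\<Sum>p\<in>basis n. cnj (B p p) * D p p)"
  unfolding hs_def
proof (rule sum.cong[OF refl])
  fix p
  assume p: "p \<in> basis n"
  then have "(\<Sum>q\<in>basis n. cnj (B p q) * Mmeas n D p q) =
      (\<Sum>q\<in>basis n. of_bool (q = p) * (cnj (B p q) * D p p))"
    by (intro sum.cong refl) (auto simp: Mmeas_apply)
  then show "(\<Sum>q\<in>basis n. cnj (B p q) * Mmeas n D p q) = cnj (B p p) * D p p"
    using p by simp
qed

(* The matrix entries (E_uv| Phi |E_xy) of omega(g)^dagger M omega(g) and of |sigma_b)(sigma_b|/2
   on one qubit.  The n-qubit entries are products of these over the qubits. *)
definition meas_kernel1 :: "sop1 \<Rightarrow> bool \<Rightarrow> bool \<Rightarrow> bool \<Rightarrow> bool \<Rightarrow> complex" where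
  "meas_kernel1 g u v x y = (\<Sum>b\<in>UNIV. cnj (g (munit1 u v) b b) * g (munit1 x y) b b)"

definition pauli_kernel1 :: "bool \<times> bool \<Rightarrow> bool \<Rightarrow> bool \<Rightarrow> bool \<Rightarrow> bool \<Rightarrow> complex" where
  "pauli_kernel1 b u v x y = cnj (pauli1 b x y) * pauli1 b u v / 2"

lemma sadj_Mmeas_stensor_apply:
  assumes n: "length gs = n" and uv: "u \<in> basis n" "v \<in> basis n"
  shows "sadj n (stensor gs) (Mmeas n (stensor gs C)) u v =
    (\<Sum>x\<in>basis n. \<Sum>y\<in>basis n. C x y * (\<Prod>i<n. meas_kernel1 (gs ! i) (u ! i) (v ! i) (x ! i) (y ! i)))"
proof -
  define E where "E = (\<lambda>x y p. \<Prod>i<n. (gs ! i) (munit1 (x ! i) (y ! i)) (p ! i) (p ! i))"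
  have "sadj n (stensor gs) (Mmeas n (stensor gs C)) u v =
      (\<Sum>p\<in>basis n. cnj (E u v p) * stensor gs C p p)"
    by (simp add: sadj_apply uv hs_Mmeas stensor_munit[OF n uv] E_def)
  also have "\<dots> = (\<Sum>p\<in>basis n. \<Sum>x\<in>basis n. \<Sum>y\<in>basis n. C x y * (cnj (E u v p) * E x y p))"
    by (simp add: stensor_apply[OF n] E_def sum_distrib_left mult_ac)
  also have "\<dots> = (\<Sum>x\<in>basis n. \<Sum>y\<in>basis n. C x y * (\<Sum>p\<in>basis n. cnj (E u v p) * E x y p))"
    by (subst sum.swap, rule sum.cong[OF refl], subst sum.swap) (simp add: sum_distrib_left)
  also have "\<dots> = (\<Sum>x\<in>basis n. \<Sum>y\<in>basis n. C x y *
      (\<Prod>i<n. meas_kernel1 (gs ! i) (u ! i) (v ! i) (x ! i) (y ! i)))"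
    unfolding E_def meas_kernel1_def basis_eq_nth_lists
    by (simp add: sum_prod_nth_lists[where f = "\<lambda>i b. cnj ((gs ! i) (munit1 (u ! i) (v ! i)) b b) *
        (gs ! i) (munit1 (x ! i) (y ! i)) b b" for x y, symmetric] prod.distrib)
  finally show ?thesis .
qed

lemma ketbra_npauli_apply:
  assumes "length a = n"
  shows "ketbra n (npauli a) (npauli a) D u v =
    (\<Sum>x\<in>basis n. \<Sum>y\<in>basis n. D x y * (\<Prod>i<n. pauli_kernel1 (a ! i) (u ! i) (v ! i) (x ! i) (y ! i)))"
proof -
  have sqrt_sq: "complex_of_real (sqrt (2 ^ n)) * complex_of_real (sqrt (2 ^ n)) = 2 ^ n"
    by (simp flip: of_real_mult)
  have kernel: "cnj (npauli a x y) * npauli a u v =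
      (\<Prod>i<n. pauli_kernel1 (a ! i) (u ! i) (v ! i) (x ! i) (y ! i))" for x y
  proof -
    have "cnj (npauli a x y) * npauli a u v = cnj (pauli a x y) * pauli a u v / 2 ^ n"
      using assms sqrt_sq by (simp add: npauli_def field_simps)
    then show ?thesis
      using assms by (simp add: pauli_def ktensor_def pauli_kernel1_def prod.distrib prod_dividef)
  qed
  have "ketbra n (npauli a) (npauli a) D u v =
      (\<Sum>x\<in>basis n. \<Sum>y\<in>basis n. D x y * (cnj (npauli a x y) * npauli a u v))"
    by (simp add: ketbra_def hs_def sum_distrib_left sum_distrib_right mult_ac)
  then show ?thesis
    by (simp only: kernel)
qed

lemma meas_kernel1_Cl1:
  assumes "g \<in> Cl1"
  shows "meas_kernel1 g u v x y = pauli_kernel1 (False, False) u v x y + pauli_kernel1 (Zlabel g) u v x y"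
proof -
  obtain U where U: "clifford_unitary1 U" "g = omega1 U"
    using assms by (rule Cl1_cases)
  then have "unitary1 U"
    by (simp add: clifford_unitary1_def)
  obtain s where s: "s = 1 \<or> s = -1" "sadj1 g pauliZ = (\<lambda>x y. s * pauli1 (Zlabel g) x y)"
    using assms by (rule sadj1_pauliZ_Zlabel)
  define Q where "Q = (\<lambda>b u v. cnj (U b u) * U b v)"
  have "omega1 U (munit1 p q) b b = U b p * cnj (U b q)" for p q b
    by (cases p; cases q) (simp_all add: mat1_defs munit1_def)
  then have kernel: "meas_kernel1 g u v x y = Q False u v * cnj (Q False x y) + Q True u v * cnj (Q True x y)"
    by (simp add: meas_kernel1_def U(2) sum_UNIV_bool Q_def mult_ac)
  have one: "id1 p q = Q False p q + Q True p q" for p q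
  proof -
    have "mmul1 (dagger1 U) U p q = id1 p q"
      using \<open>unitary1 U\<close> by (simp add: unitary1_def)
    then show ?thesis
      by (simp add: mat1_defs Q_def)
  qed
  have W: "s * pauli1 (Zlabel g) p q = Q False p q - Q True p q" for p q
  proof -
    have "sadj1 g pauliZ p q = Q False p q - Q True p q"
      unfolding U(2) sadj1_omega1 by (cases p; cases q) (simp_all add: mat1_defs pauli1_def Q_def)
    then show ?thesis
      using s(2) by simp
  qed
  have "cnj s * s = 1"
    using s(1) by auto
  then have "pauli_kernel1 (False, False) u v x y + pauli_kernel1 (Zlabel g) u v x y =
      (cnj (id1 x y) * id1 u v + cnj (s * pauli1 (Zlabel g) x y) * (s * pauli1 (Zlabel g) u v)) / 2"
    by (simp add: pauli_kernel1_def pauli1_def field_simps)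
  also have "\<dots> = meas_kernel1 g u v x y"
    unfolding one W kernel by (simp add: field_simps)
  finally show ?thesis ..
qed

lemma sum_swap_outer:
  "(\<Sum>x\<in>A. \<Sum>y\<in>B. \<Sum>z\<in>C. f x y z) = (\<Sum>z\<in>C. \<Sum>x\<in>A. \<Sum>y\<in>B. f x y z)"
  by (subst sum.swap, rule sum.cong[OF refl], rule sum.swap)

lemma hs_sum_right: "hs n Q (\<lambda>x y. \<Sum>g\<in>S. F g x y) = (\<Sum>g\<in>S. hs n Q (F g))"
  unfolding hs_def by (simp only: sum_distrib_left) (rule sum_swap_outer)

lemma ketbra_savg:
  "ketbra n P Q (savg S F A) u v = (\<Sum>g\<in>S. ketbra n P Q (F g A) u v) / of_nat (card S)"
proof -
  have "hs n Q (savg S F A) = hs n Q (\<lambda>x y. \<Sum>g\<in>S. F g A x y / of_nat (card S))"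
    by (simp add: savg_def sum_divide_distrib)
  also have "\<dots> = (\<Sum>g\<in>S. hs n Q (\<lambda>x y. F g A x y / of_nat (card S)))"
    by (rule hs_sum_right)
  also have "\<dots> = (\<Sum>g\<in>S. hs n Q (F g A)) / of_nat (card S)"
    by (simp add: hs_def sum_divide_distrib)
  finally show ?thesis
    by (simp add: ketbra_def sum_distrib_right)
qed

lemma savg_stensor_nth_lists:
  assumes "\<And>i. i < n \<Longrightarrow> finite (S i)"
  shows "savg (nth_lists n S) (\<lambda>gs. stensor (map (\<lambda>i. F i (gs ! i)) [0..<n])) A u v =
    stensor (map (\<lambda>i. savg (S i) (F i)) [0..<n]) A u v"
proof -
  define E where "E = (\<lambda>i g x y. F i g (munit1 ((x :: bool list) ! i) ((y :: bool list) ! i)) (u ! i) (v ! i))"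
  have "savg (nth_lists n S) (\<lambda>gs. stensor (map (\<lambda>i. F i (gs ! i)) [0..<n])) A u v =
      (\<Sum>gs\<in>nth_lists n S. \<Sum>x\<in>basis n. \<Sum>y\<in>basis n. A x y * (\<Prod>i<n. E i (gs ! i) x y)) /
        of_nat (card (nth_lists n S))"
    by (simp add: savg_def stensor_apply E_def)
  also have "\<dots> = (\<Sum>x\<in>basis n. \<Sum>y\<in>basis n.
      A x y * ((\<Sum>gs\<in>nth_lists n S. \<Prod>i<n. E i (gs ! i) x y) / of_nat (card (nth_lists n S))))"
    by (simp add: sum_swap_outer[of _ "basis n"] sum_distrib_left sum_divide_distrib)
  also have "\<dots> = (\<Sum>x\<in>basis n. \<Sum>y\<in>basis n. A x y * (\<Prod>i<n. (\<Sum>g\<in>S i. E i g x y) / of_nat (card (S i))))"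
    using sum_prod_nth_lists[OF assms, where f = "\<lambda>i g. E i g x y" for x y]
    by (simp add: card_nth_lists prod_dividef)
  also have "\<dots> = stensor (map (\<lambda>i. savg (S i) (F i)) [0..<n]) A u v"
    by (simp add: stensor_apply savg_def E_def)
  finally show ?thesis .
qed

lemma Gprod_eq_nth_lists: "Gprod ga a = nth_lists (length a) (\<lambda>i. Gset ga (a ! i))"
  by (simp add: Gprod_def nth_lists_def)

lemma ClN_eq_nth_lists: "ClN n = nth_lists n (\<lambda>_. Cl1)"
  unfolding ClN_def nth_lists_def by (auto simp: in_set_conv_nth subset_iff)

section \<open>The noisy frame operator\<close>

context
  fixes ga :: "bool \<times> bool \<Rightarrow> sop1"
  assumes ga: "\<forall>a. a \<noteq> (False, False) \<longrightarrow>
    ga a \<in> Cl1 \<and> sadj1 (ga a) \<circ> ketbra1 pauliZ pauliZ \<circ> ga a = ketbra1 (pauli1 a) (pauli1 a)"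
begin

lemma Gset_subset_Cl1: "Gset ga b \<subseteq> Cl1"
proof (cases "b = (False, False)")
  case False
  then have "ga b \<in> Cl1"
    using ga by blast
  then show ?thesis
    using False by (auto simp: Gset_def StZ_def intro: comp_in_Cl1)
qed (simp add: Gset_def)

lemma finite_Gset: "finite (Gset ga b)"
  using Gset_subset_Cl1 finite_Cl1 by (rule finite_subset)

lemma mem_Gset_iff:
  assumes b: "b \<noteq> (False, False)"
  shows "g \<in> Gset ga b \<longleftrightarrow> g \<in> Cl1 \<and> Zlabel g = b"
proof -
  have k: "ga b \<in> Cl1"
    and k_conj: "sadj1 (ga b) \<circ> ketbra1 pauliZ pauliZ \<circ> ga b = ketbra1 (pauli1 b) (pauli1 b)"
    using ga b by blast+
  have "g \<in> Gset ga b \<longleftrightarrow> g \<in> (\<lambda>h. h \<circ> ga b) ` StZ"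
    using b by (simp add: Gset_def)
  also have "\<dots> \<longleftrightarrow> g \<in> Cl1 \<and> sadj1 g \<circ> ketbra1 pauliZ pauliZ \<circ> g = ketbra1 (pauli1 b) (pauli1 b)"
    by (simp only: mem_StZ_coset_iff[OF k] k_conj)
  also have "\<dots> \<longleftrightarrow> g \<in> Cl1 \<and> Zlabel g = b"
    by (auto simp: conj_pauliZ_eq_iff_Zlabel)
  finally show ?thesis .
qed

lemma mem_Gset_iff_Zlabel:
  assumes g: "g \<in> Cl1"
  shows "g \<in> Gset ga b \<longleftrightarrow> b \<in> {(False, False), Zlabel g}"
proof (cases "b = (False, False)")
  case True
  then show ?thesis
    using g by (simp add: Gset_def)
next
  case False
  then show ?thesis
    using g by (auto simp: mem_Gset_iff)
qed

lemma card_Gset: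
  assumes b: "b \<noteq> (False, False)"
  shows "card (Gset ga b) = card StZ"
proof -
  have k: "ga b \<in> Cl1"
    using ga b by blast
  have cancel: "(h \<circ> ga b) \<circ> sadj1 (ga b) = h" for h
    by (simp only: comp_assoc Cl1_sadj1_inverse(2)[OF k] comp_id)
  have "inj_on (\<lambda>h. h \<circ> ga b) StZ"
    by (rule inj_onI) (metis cancel)
  then have "card ((\<lambda>h. h \<circ> ga b) ` StZ) = card StZ"
    by (rule card_image)
  then show ?thesis
    using b by (simp add: Gset_def)
qed

lemma card_Cl1: "card Cl1 = 3 * card StZ"
proof -
  let ?I = "{(False, True), (True, False), (True, True)}"
  have Cl1_eq: "Cl1 = (\<Union>b\<in>?I. Gset ga b)"
  proof (intro equalityI subsetI)
    fix g
    assume g: "g \<in> Cl1"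
    then have "Zlabel g \<in> ?I"
      using Zlabel_nonzero[OF g] by (cases "Zlabel g") auto
    then show "g \<in> (\<Union>b\<in>?I. Gset ga b)"
      using g by (auto simp: mem_Gset_iff_Zlabel)
  qed (use Gset_subset_Cl1 in blast)
  have "card Cl1 = (\<Sum>b\<in>?I. card (Gset ga b))"
    unfolding Cl1_eq by (rule card_UN_disjoint) (auto simp: finite_Gset mem_Gset_iff)
  then show ?thesis
    by (simp add: card_Gset)
qed

lemma card_Gprod: "3 ^ supp_size a * card (Gprod ga a) = card Cl1 ^ length a"
proof -
  have card_eq: "card (Gprod ga a) = (\<Prod>i<length a. card (Gset ga (a ! i)))"
    by (simp add: Gprod_eq_nth_lists card_nth_lists)
  show ?thesis
    unfolding card_eq
  proof (induction a)
    case Nil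
    then show ?case
      by (simp add: supp_size_def)
  next
    case (Cons b a)
    have "card Cl1 = (if b = (False, False) then 1 else 3) * card (Gset ga b)"
      by (cases "b = (False, False)") (simp add: Gset_def, simp add: card_Gset card_Cl1)
    with Cons.IH show ?case
      by (simp add: supp_size_def prod.lessThan_Suc_shift del: prod.lessThan_Suc)
  qed
qed

lemma Gprod_subset_ClN:
  assumes "length a = n"
  shows "Gprod ga a \<subseteq> ClN n"
  unfolding Gprod_eq_nth_lists ClN_eq_nth_lists nth_lists_def using assms Gset_subset_Cl1 by blast

lemma pauli_labels_of_ClN:
  assumes "gs \<in> ClN n"
  shows "{a \<in> pauli_labels n. gs \<in> Gprod ga a} = nth_lists n (\<lambda>i. {(False, False), Zlabel (gs ! i)})"
proof -
  have "length gs = n" and Cl1: "\<And>i. i < n \<Longrightarrow> gs ! i \<in> Cl1"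
    using assms by (simp_all add: ClN_eq_nth_lists nth_lists_def)
  have "gs \<in> Gprod ga a \<longleftrightarrow> (\<forall>i<n. a ! i \<in> {(False, False), Zlabel (gs ! i)})" if "length a = n" for a
    using that \<open>length gs = n\<close> by (simp add: Gprod_def mem_Gset_iff_Zlabel[OF Cl1])
  then show ?thesis
    by (auto simp: pauli_labels_def nth_lists_def)
qed

lemma prod_meas_kernel1:
  assumes gs: "gs \<in> ClN n"
  shows "(\<Prod>i<n. meas_kernel1 (gs ! i) (u ! i) (v ! i) (x ! i) (y ! i)) =
    (\<Sum>a\<in>{a \<in> pauli_labels n. gs \<in> Gprod ga a}. \<Prod>i<n. pauli_kernel1 (a ! i) (u ! i) (v ! i) (x ! i) (y ! i))"
proof -
  have Cl1: "gs ! i \<in> Cl1" if "i < n" for i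
    using gs that by (simp add: ClN_eq_nth_lists nth_lists_def)
  have "(\<Sum>a\<in>{a \<in> pauli_labels n. gs \<in> Gprod ga a}. \<Prod>i<n. pauli_kernel1 (a ! i) (u ! i) (v ! i) (x ! i) (y ! i))
      = (\<Prod>i<n. \<Sum>b\<in>{(False, False), Zlabel (gs ! i)}. pauli_kernel1 b (u ! i) (v ! i) (x ! i) (y ! i))"
    unfolding pauli_labels_of_ClN[OF gs] by (rule sum_prod_nth_lists) simp
  also have "\<dots> = (\<Prod>i<n. meas_kernel1 (gs ! i) (u ! i) (v ! i) (x ! i) (y ! i))"
  proof (rule prod.cong[OF refl])
    fix i
    assume "i \<in> {..<n}"
    then have "gs ! i \<in> Cl1"
      by (simp add: Cl1)
    then show "(\<Sum>b\<in>{(False, False), Zlabel (gs ! i)}. pauli_kernel1 b (u ! i) (v ! i) (x ! i) (y ! i)) =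
        meas_kernel1 (gs ! i) (u ! i) (v ! i) (x ! i) (y ! i)"
      using Zlabel_nonzero by (simp add: meas_kernel1_Cl1 eq_commute[of "(False, False)"])
  qed
  finally show ?thesis ..
qed

lemma sadj_Mmeas_stensor_pauli_expansion:
  assumes gs: "gs \<in> ClN n" and uv: "u \<in> basis n" "v \<in> basis n"
  shows "sadj n (stensor gs) (Mmeas n (stensor gs C)) u v =
    (\<Sum>a\<in>{a \<in> pauli_labels n. gs \<in> Gprod ga a}. ketbra n (npauli a) (npauli a) C u v)"
proof -
  let ?L = "{a \<in> pauli_labels n. gs \<in> Gprod ga a}"
  let ?K = "\<lambda>a x y. \<Prod>i<n. pauli_kernel1 (a ! i) (u ! i) (v ! i) (x ! i) (y ! i)"
  have "length gs = n"
    using gs by (simp add: ClN_def)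
  then have "sadj n (stensor gs) (Mmeas n (stensor gs C)) u v =
      (\<Sum>x\<in>basis n. \<Sum>y\<in>basis n. \<Sum>a\<in>?L. C x y * ?K a x y)"
    by (simp add: sadj_Mmeas_stensor_apply uv prod_meas_kernel1[OF gs] sum_distrib_left)
  also have "\<dots> = (\<Sum>a\<in>?L. \<Sum>x\<in>basis n. \<Sum>y\<in>basis n. C x y * ?K a x y)"
    by (rule sum_swap_outer)
  also have "\<dots> = (\<Sum>a\<in>?L. ketbra n (npauli a) (npauli a) C u v)"
    by (rule sum.cong[OF refl]) (simp add: ketbra_npauli_apply pauli_labels_def)
  finally show ?thesis .
qed

lemma noisy_frame_expansion:
  assumes uv: "u \<in> basis n" "v \<in> basis n"
  shows "noisy_frame n \<Lambda> A u v =
    (\<Sum>a\<in>pauli_labels n. (1 / 3 ^ supp_size a) * ketbra n (npauli a) (npauli a) (Lambda_bar ga \<Lambda> a A) u v)"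
proof -
  define N where "N = (of_nat (card Cl1) :: complex) ^ n"
  define K where "K = (\<lambda>gs a. ketbra n (npauli a) (npauli a) (\<Lambda> gs A) u v)"
  have finite_ClN: "finite (ClN n)"
    unfolding ClN_eq_nth_lists by (rule finite_nth_lists) (simp add: finite_Cl1)
  have finite_labels: "finite (pauli_labels n)"
    using finite_nth_lists[of n "\<lambda>_. UNIV :: (bool \<times> bool) set"] by (simp add: pauli_labels_def nth_lists_def)
  have "of_nat (card (ClN n)) = N"
    by (simp add: N_def ClN_eq_nth_lists card_nth_lists)
  then have "noisy_frame n \<Lambda> A u v =
      (\<Sum>gs\<in>ClN n. sadj n (stensor gs) (Mmeas n (stensor gs (\<Lambda> gs A))) u v) / N"
    by (simp add: noisy_frame_def savg_def)
  also have "\<dots> = (\<Sum>gs\<in>ClN n. \<Sum>a\<in>{a \<in> pauli_labels n. gs \<in> Gprod ga a}. K gs a) / N"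
    by (intro arg_cong[where f = "\<lambda>z. z / N"] sum.cong refl) (simp add: sadj_Mmeas_stensor_pauli_expansion uv K_def)
  also have "\<dots> = (\<Sum>a\<in>pauli_labels n. \<Sum>gs\<in>{gs \<in> ClN n. gs \<in> Gprod ga a}. K gs a) / N"
    by (simp only: sum.swap_restrict[OF finite_ClN finite_labels])
  also have "\<dots> = (\<Sum>a\<in>pauli_labels n. (\<Sum>gs\<in>Gprod ga a. K gs a) / N)"
  proof (subst sum_divide_distrib, rule sum.cong[OF refl])
    fix a
    assume "a \<in> pauli_labels n"
    then have "Gprod ga a \<subseteq> ClN n"
      by (intro Gprod_subset_ClN) (simp add: pauli_labels_def)
    then have "{gs \<in> ClN n. gs \<in> Gprod ga a} = Gprod ga a"
      by blast
    then show "(\<Sum>gs\<in>{gs \<in> ClN n. gs \<in> Gprod ga a}. K gs a) / N = (\<Sum>gs\<in>Gprod ga a. K gs a) / N"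
      by simp
  qed
  also have "\<dots> = (\<Sum>a\<in>pauli_labels n. (1 / 3 ^ supp_size a) *
      ketbra n (npauli a) (npauli a) (Lambda_bar ga \<Lambda> a A) u v)"
  proof (rule sum.cong[OF refl])
    fix a
    assume "a \<in> pauli_labels n"
    then have "card Cl1 ^ n = 3 ^ supp_size a * card (Gprod ga a)"
      using card_Gprod[of a] by (simp add: pauli_labels_def)
    then have "N = 3 ^ supp_size a * of_nat (card (Gprod ga a))"
      unfolding N_def by (metis of_nat_power of_nat_mult of_nat_numeral)
    then show "(\<Sum>gs\<in>Gprod ga a. K gs a) / N =
        (1 / 3 ^ supp_size a) * ketbra n (npauli a) (npauli a) (Lambda_bar ga \<Lambda> a A) u v"
      by (simp add: Lambda_bar_def ketbra_savg K_def)
  qed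
  finally show ?thesis .
qed

lemma Lambda_bar_local:
  assumes local: "\<forall>gs\<in>ClN n. \<Lambda> gs = stensor (map (\<lambda>i. \<Lambda>i i (gs ! i)) [0..<n])"
    and a: "a \<in> pauli_labels n"
  shows "Lambda_bar ga \<Lambda> a A u v = stensor (map (\<lambda>i. savg (Gset ga (a ! i)) (\<Lambda>i i)) [0..<n]) A u v"
proof -
  have n: "length a = n"
    using a by (simp add: pauli_labels_def)
  have "\<Lambda> gs A u v = stensor (map (\<lambda>i. \<Lambda>i i (gs ! i)) [0..<n]) A u v" if "gs \<in> Gprod ga a" for gs
    using local Gprod_subset_ClN[OF n] that by auto
  then have "Lambda_bar ga \<Lambda> a A u v =
      savg (Gprod ga a) (\<lambda>gs. stensor (map (\<lambda>i. \<Lambda>i i (gs ! i)) [0..<n])) A u v"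
    unfolding Lambda_bar_def savg_def by (simp cong: sum.cong)
  also have "\<dots> = stensor (map (\<lambda>i. savg (Gset ga (a ! i)) (\<Lambda>i i)) [0..<n]) A u v"
    unfolding Gprod_eq_nth_lists n by (rule savg_stensor_nth_lists) (rule finite_Gset)
  finally show ?thesis .
qed

end

theorem proposition4:
  fixes n :: nat
    and \<Lambda> :: "sop1 list \<Rightarrow> sop"
    and ga :: "bool \<times> bool \<Rightarrow> sop1"
  assumes channels: "\<forall>gs\<in>ClN n. quantum_channel n (\<Lambda> gs)"
    and ga: "\<forall>a. a \<noteq> (False, False) \<longrightarrow>
               ga a \<in> Cl1 \<and> sadj1 (ga a) \<circ> ketbra1 pauliZ pauliZ \<circ> ga a = ketbra1 (pauli1 a) (pauli1 a)"
  shows "(\<forall>A. \<forall>u\<in>basis n. \<forall>v\<in>basis n.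
           noisy_frame n \<Lambda> A u v =
           (\<Sum>a\<in>pauli_labels n. (1 / 3 ^ supp_size a) *
               ketbra n (npauli a) (npauli a) (Lambda_bar ga \<Lambda> a A) u v)) \<and>
         (\<forall>\<Lambda>i :: nat \<Rightarrow> sop1 \<Rightarrow> sop1.
           (\<forall>gs\<in>ClN n. \<Lambda> gs = stensor (map (\<lambda>i. \<Lambda>i i (gs ! i)) [0..<n])) \<longrightarrow>
           (\<forall>a\<in>pauli_labels n. \<forall>A. \<forall>u\<in>basis n. \<forall>v\<in>basis n.
              Lambda_bar ga \<Lambda> a A u v =
              stensor (map (\<lambda>i. savg (Gset ga (a ! i)) (\<Lambda>i i)) [0..<n]) A u v))"
  using noisy_frame_expansion[OF ga] Lambda_bar_local[OF ga] by blast

end
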